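(* (a) For all $A,B\in\mathcal Q^{\vartriangle}$, $$A-^{\vartriangle}B=\bigcap_{z^*\in C^-\setminus\{0\}}\{z\in Z:\ \sigma^{\vartriangle}_A(z^* )-^{\vartriangle}\sigma^{\vartriangle}_B(z^* )\leq -z^*(z)\}.$$ If moreover $A=\{z\in Z: \sigma^{\vartriangle}_A(z^* )\leq -z^*(z)\}$ for some $z^*\in C^-\setminus\{0\}$, then $A-^{\vartriangle}B=\{z\in Z: \sigma^{\vartriangle}_A(z^* )-^{\vartriangle}\sigma^{\vartriangle}_B(z^* )\leq -z^*(z)\}$. (b) For all $A,B\in\mathcal Q^{\triangledown}$, $$A-^{\triangledown}B=\bigcap_{z^*\in C^-\setminus\{0\}}\{z\in Z:\ -z^*(z)\leq\sigma^{\triangledown}_A(z^* )-^{\triangledown}\sigma^{\triangledown}_B(z^* )\}.$$ If moreover $A=\{z\in Z: -z^*(z)\leq\sigma^{\triangledown}_A(z^* )\}$ for some $z^*\in C^-\setminus\{0\}$, then $A-^{\triangledown}B=\{z\in Z: -z^*(z)\leq\sigma^{\triangledown}_A(z^* )-^{\triangledown}\sigma^{\triangledown}_B(z^* )\}$.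
   Context: $Z$ is a separated locally convex space with dual $Z^*$; $C\subseteq Z$ is a convex cone with $0\in C$, and $C^-=\{z^*\in Z^*: z^*(z)\leq0\ \forall z\in C\}$, assumed to satisfy $C^-\neq\{0\}$. $\mathcal Q^{\vartriangle}=\{A\subseteq Z: A=\operatorname{cl}\operatorname{co}(A+C)\}$, $\mathcal Q^{\triangledown}=\{A\subseteq Z: A=\operatorname{cl}\operatorname{co}(A-C)\}$ (both contain $\emptyset$). Set differences: for $A,B\in\mathcal Q^{\vartriangle}$, $A-^{\vartriangle}B=\{z\in Z: B+\{z\}\subseteq A\}$; for $A,B\in\mathcal Q^{\triangledown}$, $A-^{\triangledown}B=\{z\in Z: B+\{z\}\subseteq A\}$. Support-type functions: $\sigma^{\vartriangle}_D(z^* )=\inf_{z\in D}(-z^*(z))$, $\sigma^{\triangledown}_D(z^* )=\sup_{z\in D}(-z^*(z))$ (with $\inf\emptyset=+\infty$, $\sup\emptyset=-\infty$). On $\overline{\mathbb R}=\mathbb R\cup\{\pm\infty\}$: inf-addition $r+^{\vartriangle}s=\inf\{a+b: a,b\in\mathbb R, r\leq a, s\leq b\}$, sup-addition $r+^{\triangledown}s=\sup\{a+b: a,b\in\mathbb R, a\leq r, b\leq s\}$, inf-difference $r-^{\vartriangle}s=\min\{t: r\leq s+^{\vartriangle}t\}$, sup-difference $r-^{\triangledown}s=\max\{t: s+^{\triangledown}t\leq r\}$. *)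

theory Defs
  imports "HOL-Analysis.Analysis" "HOL-Library.Extended_Real"
begin

definition locally_convex_tvs :: "'z::{real_vector, t2_space} itself \<Rightarrow> bool" where
  "locally_convex_tvs _ \<longleftrightarrow>
     continuous_on UNIV (\<lambda>p::'z \<times> 'z. fst p + snd p) \<and>
     continuous_on UNIV (\<lambda>p::real \<times> 'z. fst p *\<^sub>R snd p) \<and>
     (\<forall>U::'z set. open U \<and> 0 \<in> U \<longrightarrow> (\<exists>V. open V \<and> convex V \<and> 0 \<in> V \<and> V \<subseteq> U))"

definition dual_space :: "('z::{real_vector, topological_space} \<Rightarrow> real) set" where
  "dual_space = {f. linear f \<and> continuous_on UNIV f}"

definition neg_dual_cone :: "'z::{real_vector, topological_space} set \<Rightarrow> ('z \<Rightarrow> real) set" where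
  "neg_dual_cone C = {zs \<in> dual_space. \<forall>z\<in>C. zs z \<le> 0}"

definition set_plus_C :: "'z::real_vector set \<Rightarrow> 'z set \<Rightarrow> 'z set" where
  "set_plus_C A C = {a + c | a c. a \<in> A \<and> c \<in> C}"

definition set_minus_C :: "'z::real_vector set \<Rightarrow> 'z set \<Rightarrow> 'z set" where
  "set_minus_C A C = {a - c | a c. a \<in> A \<and> c \<in> C}"

definition Q_up :: "'z::{real_vector, topological_space} set \<Rightarrow> 'z set set" where
  "Q_up C = {A. A = closure (convex hull (set_plus_C A C))}"

definition Q_down :: "'z::{real_vector, topological_space} set \<Rightarrow> 'z set set" where
  "Q_down C = {A. A = closure (convex hull (set_minus_C A C))}"

text \<open>Set difference (same formula for both the inf- and sup-type spaces).\<close>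
definition set_diff :: "'z::real_vector set \<Rightarrow> 'z set \<Rightarrow> 'z set" where
  "set_diff A B = {z. {b + z | b. b \<in> B} \<subseteq> A}"

definition sigma_up :: "'z set \<Rightarrow> ('z \<Rightarrow> real) \<Rightarrow> ereal" where
  "sigma_up D zs = (INF z\<in>D. ereal (- zs z))"

definition sigma_down :: "'z set \<Rightarrow> ('z \<Rightarrow> real) \<Rightarrow> ereal" where
  "sigma_down D zs = (SUP z\<in>D. ereal (- zs z))"

definition inf_add :: "ereal \<Rightarrow> ereal \<Rightarrow> ereal" where
  "inf_add r s = Inf {ereal (a + b) | a b. r \<le> ereal a \<and> s \<le> ereal b}"

definition sup_add :: "ereal \<Rightarrow> ereal \<Rightarrow> ereal" where
  "sup_add r s = Sup {ereal (a + b) | a b. ereal a \<le> r \<and> ereal b \<le> s}"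

definition inf_diff :: "ereal \<Rightarrow> ereal \<Rightarrow> ereal" where
  "inf_diff r s = (LEAST t. r \<le> inf_add s t)"

definition sup_diff :: "ereal \<Rightarrow> ereal \<Rightarrow> ereal" where
  "sup_diff r s = (GREATEST t. sup_add s t \<le> r)"

end

theory Submission
  imports Defs
begin

text \<open>
  The heart of the matter is a dual representation: every \<open>A \<in> Q_up C\<close> is the
  intersection of the half-spaces \<open>{x. sigma_up A zs \<le> - zs x}\<close> over the nonzero
  \<open>zs \<in> neg_dual_cone C\<close> (and dually for \<open>Q_down C\<close>).  Separation from a set that
  is invariant under translations by a cone yields a functional in the negative dual
  cone.  Finally, for a set
  cut out by half-spaces, \<open>B + z \<subseteq> A\<close> is checked functional by functional, which gives
  both formulas of the theorem.
\<close>

definition sublinear :: "('z::real_vector \<Rightarrow> real) \<Rightarrow> bool" where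
  "sublinear q \<longleftrightarrow> (\<forall>x y. q (x + y) \<le> q x + q y) \<and> (\<forall>s x. 0 < s \<longrightarrow> q (s *\<^sub>R x) = s * q x)"

text \<open>Positive homogeneity only needs to be checked as an inequality: the reverse
  inequality follows by scaling with the inverse factor.\<close>
lemma sublinearI:
  assumes add: "\<And>x y. q (x + y) \<le> q x + q y"
    and scale: "\<And>s x. 0 < s \<Longrightarrow> q (s *\<^sub>R x) \<le> s * q x"
  shows "sublinear q"
  unfolding sublinear_def
proof (intro conjI allI impI add antisym)
  fix s :: real and x assume s: "0 < s"
  show "q (s *\<^sub>R x) \<le> s * q x" using scale[OF s] .
  have "q x = q (inverse s *\<^sub>R (s *\<^sub>R x))" using s by simp
  also have "\<dots> \<le> inverse s * q (s *\<^sub>R x)" using scale[of "inverse s" "s *\<^sub>R x"] s by simp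
  finally show "s * q x \<le> q (s *\<^sub>R x)" using s by (simp add: field_simps)
qed

lemma sublinear_add: "sublinear q \<Longrightarrow> q (x + y) \<le> q x + q y"
  unfolding sublinear_def by blast

lemma sublinear_scale: "sublinear q \<Longrightarrow> 0 < s \<Longrightarrow> q (s *\<^sub>R x) = s * q x"
  unfolding sublinear_def by blast

lemma sublinear_zero: "sublinear q \<Longrightarrow> q 0 = 0"
  using sublinear_scale[of q 2 0] by simp

lemma sublinear_nonneg_scale: "sublinear q \<Longrightarrow> 0 \<le> s \<Longrightarrow> q (s *\<^sub>R x) = s * q x"
  by (cases "s = 0") (simp_all add: sublinear_zero sublinear_scale)

lemma sublinear_neg_le: "sublinear q \<Longrightarrow> - q (- x) \<le> q x"
  using sublinear_add[of q x "- x"] sublinear_zero[of q] by simp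

lemma le_Inf_add:
  fixes f g :: "_ \<Rightarrow> real"
  assumes "A \<noteq> {}" "B \<noteq> {}" and le: "\<And>a b. a \<in> A \<Longrightarrow> b \<in> B \<Longrightarrow> c \<le> f a + g b"
  shows "c \<le> Inf (f ` A) + Inf (g ` B)"
proof -
  have "c - g b \<le> Inf (f ` A)" if "b \<in> B" for b
    using le that assms(1) by (intro cInf_greatest) (auto simp: algebra_simps)
  then have "c - Inf (f ` A) \<le> Inf (g ` B)"
    using assms(2) by (intro cInf_greatest) (auto simp: algebra_simps)
  then show ?thesis by simp
qed

text \<open>This
  replaces the usual one-dimensional extension step of the Hahn--Banach proof.\<close>
definition descend :: "('z::real_vector \<Rightarrow> real) \<Rightarrow> 'z \<Rightarrow> real \<Rightarrow> 'z \<Rightarrow> real" where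
  "descend q x c y = Inf ((\<lambda>t. q (y + t *\<^sub>R x) - t * c) ` {0..})"

context
  fixes q :: "'z::real_vector \<Rightarrow> real" and x :: 'z and c :: real
  assumes q: "sublinear q" and c: "c \<le> q x"
begin

lemma descend_lower: "0 \<le> t \<Longrightarrow> descend q x c y \<le> q (y + t *\<^sub>R x) - t * c"
  unfolding descend_def
proof (rule cInf_lower)
  show "bdd_below ((\<lambda>t. q (y + t *\<^sub>R x) - t * c) ` {0..})"
  proof (rule bdd_belowI2)
    fix t :: real assume "t \<in> {0..}"
    then have "t * c \<le> q (t *\<^sub>R x)" using c by (simp add: sublinear_nonneg_scale[OF q] mult_left_mono)
    also have "\<dots> \<le> q (y + t *\<^sub>R x) + q (- y)" using sublinear_add[OF q, of "y + t *\<^sub>R x" "- y"] by simp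
    finally show "- q (- y) \<le> q (y + t *\<^sub>R x) - t * c" by simp
  qed
qed auto

lemma descend_le: "descend q x c y \<le> q y"
  using descend_lower[of 0 y] by simp

lemma descend_neg: "descend q x c (- x) \<le> - c"
  using descend_lower[of 1 "- x"] sublinear_zero[OF q] by simp

lemma sublinear_descend: "sublinear (descend q x c)"
proof (rule sublinearI)
  fix y1 y2
  show "descend q x c (y1 + y2) \<le> descend q x c y1 + descend q x c y2"
    unfolding descend_def[of q x c y1] descend_def[of q x c y2]
  proof (rule le_Inf_add)
    fix t1 t2 :: real assume "t1 \<in> {0..}" "t2 \<in> {0..}"
    then have "descend q x c (y1 + y2) \<le> q ((y1 + t1 *\<^sub>R x) + (y2 + t2 *\<^sub>R x)) - (t1 + t2) * c"
      using descend_lower[of "t1 + t2" "y1 + y2"] by (simp add: algebra_simps)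
    moreover have "q ((y1 + t1 *\<^sub>R x) + (y2 + t2 *\<^sub>R x)) \<le> q (y1 + t1 *\<^sub>R x) + q (y2 + t2 *\<^sub>R x)"
      by (rule sublinear_add[OF q])
    ultimately show "descend q x c (y1 + y2) \<le> (q (y1 + t1 *\<^sub>R x) - t1 * c) + (q (y2 + t2 *\<^sub>R x) - t2 * c)"
      by (simp add: algebra_simps)
  qed auto
next
  fix s :: real and y assume s: "0 < s"
  have "descend q x c (s *\<^sub>R y) \<le> s * (q (y + t *\<^sub>R x) - t * c)" if "0 \<le> t" for t
    using descend_lower[of "s * t" "s *\<^sub>R y"] that s sublinear_scale[OF q s, of "y + t *\<^sub>R x"]
    by (simp add: algebra_simps)
  then have "descend q x c (s *\<^sub>R y) / s \<le> descend q x c y"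
    unfolding descend_def[of q x c y] using s by (intro cInf_greatest) (auto simp: field_simps)
  then show "descend q x c (s *\<^sub>R y) \<le> s * descend q x c y" using s by (simp add: field_simps)
qed

end

text \<open>The pointwise infimum of a chain of sublinear functionals that is bounded
  below is sublinear; this provides lower bounds for chains in Zorn's lemma.\<close>
lemma sublinear_chain_Inf:
  fixes Ch :: "('z::real_vector \<Rightarrow> real) set"
  assumes sub: "\<And>q. q \<in> Ch \<Longrightarrow> sublinear q" and ne: "Ch \<noteq> {}"
    and bounded: "\<And>q. q \<in> Ch \<Longrightarrow> \<mu> \<le> q"
    and chain: "\<And>q1 q2. q1 \<in> Ch \<Longrightarrow> q2 \<in> Ch \<Longrightarrow> q1 \<le> q2 \<or> q2 \<le> q1"
  shows "sublinear (\<lambda>x. Inf ((\<lambda>q. q x) ` Ch))" and "\<And>q. q \<in> Ch \<Longrightarrow> (\<lambda>x. Inf ((\<lambda>q. q x) ` Ch)) \<le> q"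
proof -
  define g where "g x = Inf ((\<lambda>q. q x) ` Ch)" for x
  have lower: "g x \<le> q x" if "q \<in> Ch" for q x
    unfolding g_def using that bounded by (intro cInf_lower bdd_belowI2[of _ "\<mu> x"]) (auto simp: le_fun_def)
  show "sublinear g"
  proof (rule sublinearI)
    fix x y
    show "g (x + y) \<le> g x + g y"
      unfolding g_def[of x] g_def[of y]
    proof (rule le_Inf_add)
      fix q1 q2 assume q12: "q1 \<in> Ch" "q2 \<in> Ch"
      show "g (x + y) \<le> q1 x + q2 y"
      using chain[OF q12]
      proof
        assume "q1 \<le> q2"
        then show ?thesis using lower[OF q12(1), of "x + y"] sublinear_add[OF sub[OF q12(1)], of x y]
          by (auto simp: le_fun_def intro: order_trans add_left_mono)
      next
        assume "q2 \<le> q1"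
        then show ?thesis using lower[OF q12(2), of "x + y"] sublinear_add[OF sub[OF q12(2)], of x y]
          by (auto simp: le_fun_def intro: order_trans add_right_mono)
      qed
    qed (use ne in auto)
  next
    fix s :: real and x assume s: "0 < s"
    have "g (s *\<^sub>R x) / s \<le> g x"
      unfolding g_def[of x] using ne s lower sublinear_scale[OF sub s]
      by (intro cInf_greatest) (auto simp: field_simps)
    then show "g (s *\<^sub>R x) \<le> s * g x" using s by (simp add: field_simps)
  qed
  show "g \<le> q" if "q \<in> Ch" for q using lower[OF that] by (simp add: le_fun_def)
qed

text \<open>A minimal sublinear functional is linear: descending it in direction \<open>x\<close>
  to the level \<open>q x\<close> does not change it, whence \<open>q (- x) = - q x\<close>.\<close>
lemma minimal_sublinear_linear:
  assumes q: "sublinear q" and minimal: "\<And>p. sublinear p \<Longrightarrow> p \<le> q \<Longrightarrow> p = q"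
  shows "linear q"
proof -
  have neg: "q (- x) = - q x" for x
  proof -
    have "descend q x (q x) = q"
      using minimal sublinear_descend[OF q order_refl] descend_le[OF q order_refl] by (simp add: le_fun_def)
    then have "q (- x) \<le> - q x" using descend_neg[OF q order_refl, of x] by simp
    then show ?thesis using sublinear_neg_le[OF q, of x] by linarith
  qed
  have add: "q (x + y) = q x + q y" for x y
    using sublinear_add[OF q, of x y] sublinear_add[OF q, of "- x" "- y"] neg[of "x + y"] neg[of x] neg[of y]
    by (simp add: algebra_simps)
  have scale: "q (s *\<^sub>R x) = s * q x" for s x
  proof (cases "0 \<le> s")
    case True then show ?thesis by (rule sublinear_nonneg_scale[OF q])
  next
    case False
    then have "q ((- s) *\<^sub>R x) = - s * q x" by (intro sublinear_nonneg_scale[OF q]) auto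
    then show ?thesis using neg[of "s *\<^sub>R x"] by simp
  qed
  show ?thesis by (rule linearI) (simp_all add: add scale)
qed

text \<open>Zorn's lemma, applied to the sublinear functionals \<open>q \<le> \<mu>\<close> with \<open>q (- x0) \<le> - \<mu> x0\<close>
  ordered pointwise, yields a member of this family that is minimal among all sublinear
  functionals.  Nonempty chains are bounded below by their pointwise infimum, the empty
  chain by the functional obtained by descending \<open>\<mu>\<close> in direction \<open>x0\<close>.\<close>
lemma minimal_sublinear_below:
  fixes \<mu> :: "'z::real_vector \<Rightarrow> real"
  assumes mu: "sublinear \<mu>"
  obtains m where "sublinear m" "m \<le> \<mu>" "m (- x0) \<le> - \<mu> x0"
    "\<And>p. sublinear p \<Longrightarrow> p \<le> m \<Longrightarrow> p = m"
proof -
  define Fam where "Fam = {q. sublinear q \<and> q \<le> \<mu> \<and> q (- x0) \<le> - \<mu> x0}"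
  define below :: "('z \<Rightarrow> real) \<Rightarrow> ('z \<Rightarrow> real) \<Rightarrow> bool" where "below q p \<longleftrightarrow> p \<le> q" for q p
  have "\<exists>m\<in>Fam. \<forall>q\<in>Fam. below m q \<longrightarrow> q = m"
  proof (rule predicate_Zorn)
    show "partial_order_on Fam (relation_of below Fam)"
      by (rule partial_order_on_relation_ofI) (auto simp: below_def)
  next
    fix Ch assume Ch: "Ch \<in> Chains (relation_of below Fam)"
    then have ChF: "Ch \<subseteq> Fam" by (rule Chains_relation_of)
    show "\<exists>u\<in>Fam. \<forall>q\<in>Ch. below q u"
    proof (cases "Ch = {}")
      case True
      have "descend \<mu> x0 (\<mu> x0) \<in> Fam"
        unfolding Fam_def using sublinear_descend[OF mu order_refl] descend_le[OF mu order_refl]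
          descend_neg[OF mu order_refl] by (auto simp: le_fun_def)
      then show ?thesis using True by blast
    next
      case False
      then obtain q0 where q0: "q0 \<in> Ch" by blast
      have chain: "q1 \<le> q2 \<or> q2 \<le> q1" if "q1 \<in> Ch" "q2 \<in> Ch" for q1 q2
        using Ch that unfolding Chains_def relation_of_def below_def by blast
      have sub: "sublinear q" if "q \<in> Ch" for q using ChF that unfolding Fam_def by blast
      have bound: "(\<lambda>x. - \<mu> (- x)) \<le> q" if "q \<in> Ch" for q
      proof (rule le_funI)
        fix x
        have "q (- x) \<le> \<mu> (- x)" using ChF that unfolding Fam_def le_fun_def by blast
        then show "- \<mu> (- x) \<le> q x" using sublinear_neg_le[OF sub[OF that], of x] by linarith
      qed
      let ?g = "\<lambda>x. Inf ((\<lambda>q. q x) ` Ch)"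
      have g_sub: "sublinear ?g" by (rule sublinear_chain_Inf(1)[OF sub False bound chain])
      have g_le: "?g \<le> q" if "q \<in> Ch" for q by (rule sublinear_chain_Inf(2)[OF sub False bound chain that])
      have "?g \<le> q0" "q0 \<le> \<mu>" "q0 (- x0) \<le> - \<mu> x0" using g_le[OF q0] q0 ChF unfolding Fam_def by auto
      then have "?g \<in> Fam" using g_sub unfolding Fam_def le_fun_def by (auto intro: order_trans)
      then show ?thesis using g_le unfolding below_def by blast
    qed
  qed
  then obtain m where m: "m \<in> Fam" and min: "\<And>q. q \<in> Fam \<Longrightarrow> q \<le> m \<Longrightarrow> q = m"
    unfolding below_def by blast
  have "p = m" if "sublinear p" "p \<le> m" for p
  proof (rule min)
    show "p \<in> Fam" using that m unfolding Fam_def le_fun_def by (auto intro: order_trans)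
  qed (rule that(2))
  then show ?thesis using that m unfolding Fam_def by blast
qed

theorem hahn_banach_sublinear:
  fixes \<mu> :: "'z::real_vector \<Rightarrow> real"
  assumes mu: "sublinear \<mu>"
  shows "\<exists>F. linear F \<and> F \<le> \<mu> \<and> \<mu> x0 \<le> F x0"
proof -
  obtain m where m: "sublinear m" "m \<le> \<mu>" "m (- x0) \<le> - \<mu> x0"
      and minimal: "\<And>p. sublinear p \<Longrightarrow> p \<le> m \<Longrightarrow> p = m"
    using minimal_sublinear_below[OF mu] by blast
  have "linear m" by (rule minimal_sublinear_linear[OF m(1) minimal])
  moreover have "\<mu> x0 \<le> m x0" using m(3) \<open>linear m\<close> by (simp add: linear_neg)
  ultimately show ?thesis using m(2) by blast
qed

definition minkowski_functional :: "'z::real_vector set \<Rightarrow> 'z \<Rightarrow> real" where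
  "minkowski_functional U x = Inf {t. 0 < t \<and> inverse t *\<^sub>R x \<in> U}"

lemma minkowski_functional:
  fixes U :: "'z::real_vector set"
  assumes cvx: "convex U" and U0: "0 \<in> U" and absorbing: "\<And>x. \<exists>t>0. inverse t *\<^sub>R x \<in> U"
  shows "sublinear (minkowski_functional U)"
    and "\<And>x. x \<in> U \<Longrightarrow> minkowski_functional U x \<le> 1"
    and "\<And>x. x \<notin> U \<Longrightarrow> 1 \<le> minkowski_functional U x"
proof -
  define S where "S x = {t. 0 < t \<and> inverse t *\<^sub>R x \<in> U}" for x
  have \<mu>: "minkowski_functional U x = Inf (S x)" for x unfolding minkowski_functional_def S_def ..
  have ne: "S x \<noteq> {}" for x using absorbing[of x] unfolding S_def by auto
  have lower: "minkowski_functional U x \<le> t" if "t \<in> S x" for x t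
    unfolding \<mu> by (rule cInf_lower[OF that]) (auto simp: S_def intro: bdd_belowI[of _ 0])
  have S_add: "t1 + t2 \<in> S (x + y)" if "t1 \<in> S x" "t2 \<in> S y" for t1 t2 x y
  proof -
    have t: "0 < t1" "0 < t2" "inverse t1 *\<^sub>R x \<in> U" "inverse t2 *\<^sub>R y \<in> U" using that unfolding S_def by auto
    have "(t1 / (t1 + t2)) *\<^sub>R (inverse t1 *\<^sub>R x) + (t2 / (t1 + t2)) *\<^sub>R (inverse t2 *\<^sub>R y) \<in> U"
      using t by (intro convexD[OF cvx]) (auto simp: divide_simps)
    also have "(t1 / (t1 + t2)) *\<^sub>R (inverse t1 *\<^sub>R x) + (t2 / (t1 + t2)) *\<^sub>R (inverse t2 *\<^sub>R y)
        = inverse (t1 + t2) *\<^sub>R (x + y)"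
      using t by (simp add: scaleR_add_right divide_simps)
    finally show ?thesis using t unfolding S_def by auto
  qed
  show "sublinear (minkowski_functional U)"
  proof (rule sublinearI)
    fix x y
    show "minkowski_functional U (x + y) \<le> minkowski_functional U x + minkowski_functional U y"
      unfolding \<mu>[of x] \<mu>[of y] using ne by (intro le_Inf_add[where f=id and g=id, simplified] lower S_add)
  next
    fix s :: real and x assume s: "0 < s"
    have "s * t \<in> S (s *\<^sub>R x)" if "t \<in> S x" for t
    proof -
      have eq: "inverse (s * t) *\<^sub>R (s *\<^sub>R x) = inverse t *\<^sub>R x" using s by simp
      show ?thesis using that s unfolding S_def mem_Collect_eq eq by simp
    qed
    then have "minkowski_functional U (s *\<^sub>R x) / s \<le> minkowski_functional U x"
      unfolding \<mu>[of x] using ne s lower by (intro cInf_greatest) (auto simp: field_simps)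
    then show "minkowski_functional U (s *\<^sub>R x) \<le> s * minkowski_functional U x" using s by (simp add: field_simps)
  qed
  show "minkowski_functional U x \<le> 1" if "x \<in> U" for x using lower[of 1 x] that unfolding S_def by auto
  show "1 \<le> minkowski_functional U x" if "x \<notin> U" for x
  proof (rule ccontr)
    assume "\<not> 1 \<le> minkowski_functional U x"
    then obtain t where t: "t \<in> S x" "t < 1" using cInf_lessD[OF ne[of x]] unfolding \<mu> by force
    then have t_pos: "0 < t" and scaled: "inverse t *\<^sub>R x \<in> U" unfolding S_def by auto
    have "t *\<^sub>R (inverse t *\<^sub>R x) + (1 - t) *\<^sub>R 0 \<in> U"
      by (rule convexD[OF cvx scaled U0]) (use t t_pos in auto)
    then show False using t_pos that by simp
  qed
qed

lemma tvs_continuous: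
  assumes "locally_convex_tvs TYPE('z::{real_vector, t2_space})"
  shows "continuous_on UNIV (\<lambda>z::'z. a + z)"
    and "continuous_on UNIV (\<lambda>z::'z. c *\<^sub>R z)"
    and "continuous_on UNIV (\<lambda>s::real. s *\<^sub>R (x::'z))"
proof -
  have add: "continuous_on UNIV (\<lambda>p::'z \<times> 'z. fst p + snd p)"
    and scale: "continuous_on UNIV (\<lambda>p::real \<times> 'z. fst p *\<^sub>R snd p)"
    using assms unfolding locally_convex_tvs_def by auto
  show "continuous_on UNIV (\<lambda>z::'z. a + z)"
    using continuous_on_compose2[OF add continuous_on_Pair[OF continuous_on_const continuous_on_id]] by simp
  show "continuous_on UNIV (\<lambda>z::'z. c *\<^sub>R z)"
    using continuous_on_compose2[OF scale continuous_on_Pair[OF continuous_on_const continuous_on_id]] by simp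
  show "continuous_on UNIV (\<lambda>s::real. s *\<^sub>R (x::'z))"
    using continuous_on_compose2[OF scale continuous_on_Pair[OF continuous_on_id continuous_on_const]] by simp
qed

lemma tvs_absorbing:
  assumes lcs: "locally_convex_tvs TYPE('z::{real_vector, t2_space})"
    and N: "open (N::'z set)" "0 \<in> N"
  shows "\<exists>d>0. \<forall>s. \<bar>s\<bar> < d \<longrightarrow> s *\<^sub>R x \<in> N"
proof -
  have "open ((\<lambda>s::real. s *\<^sub>R x) -` N)" by (rule open_vimage[OF N(1) tvs_continuous(3)[OF lcs]])
  moreover have "0 \<in> (\<lambda>s::real. s *\<^sub>R x) -` N" using N by simp
  ultimately obtain d where "d > 0" "\<And>s. dist s 0 < d \<Longrightarrow> s \<in> (\<lambda>s::real. s *\<^sub>R x) -` N"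
    unfolding open_dist by blast
  then show ?thesis by (intro exI[of _ d]) auto
qed

lemma tvs_symmetric_convex_nbhd:
  assumes lcs: "locally_convex_tvs TYPE('z::{real_vector, t2_space})"
    and W: "open (W::'z set)" "0 \<in> W"
  obtains N where "open N" "convex N" "0 \<in> N" "\<And>n. n \<in> N \<Longrightarrow> - n \<in> N" "N \<subseteq> W"
proof -
  obtain V where V: "open V" "convex V" "0 \<in> V" "V \<subseteq> W"
    using lcs W unfolding locally_convex_tvs_def by meson
  have neg_V: "uminus ` V = (\<lambda>z. (- 1) *\<^sub>R z) -` V" by force
  have "open (uminus ` V)" unfolding neg_V by (rule open_vimage[OF V(1) tvs_continuous(2)[OF lcs]])
  then show ?thesis
    using V by (intro that[of "V \<inter> uminus ` V"]) (auto intro!: convex_Int convex_negations)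
qed

lemma linear_continuous_if_bounded:
  assumes lcs: "locally_convex_tvs TYPE('z::{real_vector, t2_space})"
    and F: "linear (F :: 'z \<Rightarrow> real)"
    and N: "open N" "0 \<in> N" and bounded: "\<And>n. n \<in> N \<Longrightarrow> \<bar>F n\<bar> \<le> 1"
  shows "continuous_on UNIV F"
  unfolding continuous_on_topological
proof (intro ballI allI impI)
  fix x B assume B: "open B" "F x \<in> B"
  then obtain e where e: "e > 0" "\<And>y. dist y (F x) < e \<Longrightarrow> y \<in> B" unfolding open_dist by blast
  define c where "c = 2 / e"
  have c: "c > 0" using e unfolding c_def by auto
  define A where "A = (\<lambda>z. - (c *\<^sub>R x) + c *\<^sub>R z) -` N"
  have "continuous_on UNIV (\<lambda>z. - (c *\<^sub>R x) + c *\<^sub>R z)"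
    using continuous_on_compose2[OF tvs_continuous(1)[OF lcs, of "- (c *\<^sub>R x)"] tvs_continuous(2)[OF lcs, of c]]
    by simp
  then have "open A" unfolding A_def by (rule open_vimage[OF N(1)])
  moreover have "x \<in> A" using N(2) unfolding A_def by simp
  moreover have "F y \<in> B" if "y \<in> A" for y
  proof -
    have "c *\<^sub>R (y - x) \<in> N" using that unfolding A_def by (simp add: scaleR_diff_right)
    then have "\<bar>F (c *\<^sub>R (y - x))\<bar> \<le> 1" by (rule bounded)
    then have "\<bar>c * (F y - F x)\<bar> \<le> 1" using F by (simp add: linear_cmul linear_diff algebra_simps)
    then have "c * \<bar>F y - F x\<bar> \<le> 1" using c by (simp add: abs_mult)
    then have "\<bar>F y - F x\<bar> < e" using c e unfolding c_def by (simp add: field_simps)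
    then show ?thesis using e by (simp add: dist_real_def)
  qed
  ultimately show "\<exists>A. open A \<and> x \<in> A \<and> (\<forall>y\<in>UNIV. y \<in> A \<longrightarrow> F y \<in> B)" by blast
qed

text \<open>A point outside a convex set containing a symmetric open neighbourhood of 0 is
  separated from it by a continuous linear functional: apply Hahn--Banach to the gauge.\<close>
lemma separate_from_convex_nbhd:
  assumes lcs: "locally_convex_tvs TYPE('z::{real_vector, t2_space})"
    and U: "convex (U::'z set)" and N: "open N" "0 \<in> N" "N \<subseteq> U"
    and N_sym: "\<And>n. n \<in> N \<Longrightarrow> - n \<in> N" and x0: "x0 \<notin> U"
  shows "\<exists>F::'z \<Rightarrow> real. linear F \<and> continuous_on UNIV F \<and> (\<forall>u\<in>U. F u \<le> 1) \<and> 1 \<le> F x0"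
proof -
  have absorbing: "\<exists>t>0. inverse t *\<^sub>R x \<in> U" for x
  proof -
    obtain d where d: "d > 0" "\<And>s. \<bar>s\<bar> < d \<Longrightarrow> s *\<^sub>R x \<in> N" using tvs_absorbing[OF lcs N(1,2)] by blast
    then have "inverse (2 / d) *\<^sub>R x \<in> N" by simp
    then show ?thesis using d N(3) by (intro exI[of _ "2 / d"]) auto
  qed
  note gauge = minkowski_functional[OF U subsetD[OF N(3,2)] absorbing]
  obtain F where F: "linear F" "F \<le> minkowski_functional U" "minkowski_functional U x0 \<le> F x0"
    using hahn_banach_sublinear[OF gauge(1)] by blast
  have below_1: "F u \<le> 1" if "u \<in> U" for u using F(2) gauge(2)[OF that] by (auto simp: le_fun_def intro: order_trans)
  have "\<bar>F n\<bar> \<le> 1" if "n \<in> N" for n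
  proof -
    have "F n \<le> 1" "F (- n) \<le> 1" using below_1 N(3) N_sym[OF that] that by auto
    then show ?thesis using F(1) by (simp add: linear_neg)
  qed
  then have "continuous_on UNIV F" by (rule linear_continuous_if_bounded[OF lcs F(1) N(1,2)])
  then show ?thesis using F below_1 gauge(3)[OF x0] by (intro exI[of _ F]) auto
qed

text \<open>Strict separation of a point \<open>p\<close> from a convex set \<open>K\<close> that stays away from
  \<open>p + N\<close>, \<open>N\<close> a symmetric convex open neighbourhood of 0.  With \<open>a0 \<in> K\<close>, the set
  \<open>U = K - a0 + N\<close> does not contain \<open>p - a0\<close>; the functional of the previous lemma
  separates strictly because \<open>K - a0 + t (p - a0) \<subseteq> U\<close> for small \<open>t > 0\<close>.\<close>
lemma separation_from_thickened:
  assumes lcs: "locally_convex_tvs TYPE('z::{real_vector, t2_space})"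
    and K: "convex (K::'z set)" "a0 \<in> K"
    and N: "open N" "convex N" "0 \<in> N" "\<And>n. n \<in> N \<Longrightarrow> - n \<in> N"
    and avoid: "\<And>n. n \<in> N \<Longrightarrow> p + n \<notin> K"
  shows "\<exists>(F::'z \<Rightarrow> real) c. linear F \<and> continuous_on UNIV F \<and> (\<forall>k\<in>K. F k \<le> c) \<and> c < F p"
proof -
  define U where "U = (\<Union>k\<in>(\<lambda>k. k - a0) ` K. \<Union>n\<in>N. {k + n})"
  have U_iff: "u \<in> U \<longleftrightarrow> (\<exists>k\<in>K. \<exists>n\<in>N. u = k - a0 + n)" for u unfolding U_def by blast
  have "convex U" unfolding U_def by (intro convex_sums convex_translation_subtract K(1) N(2))
  moreover have "N \<subseteq> U"
  proof
    fix n assume "n \<in> N"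
    then show "n \<in> U" using K(2) unfolding U_iff by (intro bexI[of _ a0] bexI[of _ n]) auto
  qed
  moreover have "p - a0 \<notin> U"
  proof
    assume "p - a0 \<in> U"
    then obtain k n where "k \<in> K" "n \<in> N" "p + - n = k" unfolding U_iff by (auto simp: algebra_simps)
    then show False using avoid N(4) by blast
  qed
  ultimately obtain F :: "'z \<Rightarrow> real" where F: "linear F" "continuous_on UNIV F"
      "\<And>u. u \<in> U \<Longrightarrow> F u \<le> 1" "1 \<le> F (p - a0)"
    using separate_from_convex_nbhd[OF lcs _ N(1,3) _ N(4)] by blast
  obtain d where d: "d > 0" "\<And>s. \<bar>s\<bar> < d \<Longrightarrow> s *\<^sub>R (p - a0) \<in> N"
    using tvs_absorbing[OF lcs N(1,3)] by blast
  define t where "t = d / 2"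
  have t: "t > 0" "t *\<^sub>R (p - a0) \<in> N" using d unfolding t_def by auto
  define c where "c = 1 + F a0 - t * F (p - a0)"
  have "F k \<le> c" if "k \<in> K" for k
  proof -
    have "k - a0 + t *\<^sub>R (p - a0) \<in> U" unfolding U_iff using that t(2) by blast
    then have "F (k - a0 + t *\<^sub>R (p - a0)) \<le> 1" by (rule F(3))
    then show ?thesis using F(1) unfolding c_def by (simp add: linear_diff linear_add linear_cmul algebra_simps)
  qed
  moreover have "c < F p"
  proof -
    have "0 < t * F (p - a0)" using t(1) F(4) by simp
    moreover have "F p = F (p - a0) + F a0" using F(1) by (simp add: linear_diff)
    ultimately show ?thesis unfolding c_def using F(4) by linarith
  qed
  ultimately show ?thesis using F(1,2) by (intro exI[of _ F] exI[of _ c]) auto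
qed

theorem separation:
  assumes lcs: "locally_convex_tvs TYPE('z::{real_vector, t2_space})"
    and K: "convex (K::'z set)" "K \<noteq> {}" and p: "p \<notin> closure K"
  shows "\<exists>(F::'z \<Rightarrow> real) c. linear F \<and> continuous_on UNIV F \<and> (\<forall>a\<in>closure K. F a \<le> c) \<and> c < F p"
proof -
  have "open ((\<lambda>z. p + z) -` (- closure K))" by (rule open_vimage[OF _ tvs_continuous(1)[OF lcs]]) auto
  moreover have "0 \<in> (\<lambda>z. p + z) -` (- closure K)" using p by simp
  ultimately obtain N where N: "open N" "convex N" "0 \<in> N" "\<And>n. n \<in> N \<Longrightarrow> - n \<in> N"
      and avoid: "\<And>n. n \<in> N \<Longrightarrow> p + n \<notin> closure K"
    by (rule tvs_symmetric_convex_nbhd[OF lcs]) auto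
  have "p + n \<notin> K" if "n \<in> N" for n using avoid[OF that] closure_subset by blast
  moreover obtain a0 where "a0 \<in> K" using K(2) by blast
  ultimately obtain F :: "'z \<Rightarrow> real" and c
    where F: "linear F" "continuous_on UNIV F" "\<And>k. k \<in> K \<Longrightarrow> F k \<le> c" "c < F p"
    using separation_from_thickened[OF lcs K(1) _ N] by meson
  have "closure K \<subseteq> {x. F x \<le> c}"
    using F(3) by (intro closure_minimal) (auto intro: closed_Collect_le[OF F(2) continuous_on_const])
  then show ?thesis using F(1,2,4) by (intro exI[of _ F] exI[of _ c]) auto
qed

lemma Q_up_invariant:
  assumes "A \<in> Q_up C" "a \<in> A" "c \<in> C"
  shows "a + c \<in> A"
proof -
  have A: "A = closure (convex hull (set_plus_C A C))" using assms(1) unfolding Q_up_def by blast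
  have "a + c \<in> set_plus_C A C" using assms(2,3) unfolding set_plus_C_def by blast
  then show ?thesis by (subst A) (meson closure_subset hull_subset subsetD)
qed

lemma Q_down_invariant:
  assumes "A \<in> Q_down C" "a \<in> A" "c \<in> uminus ` C"
  shows "a + c \<in> A"
proof -
  have A: "A = closure (convex hull (set_minus_C A C))" using assms(1) unfolding Q_down_def by blast
  have "a + c \<in> set_minus_C A C" using assms(2,3) unfolding set_minus_C_def by force
  then show ?thesis by (subst A) (meson closure_subset hull_subset subsetD)
qed

text \<open>If the closure of a convex set is invariant under translations by a cone \<open>C\<close>, every
  separating functional is nonpositive on \<open>C\<close>: otherwise moving far along \<open>C\<close> would
  leave the half-space containing the set.\<close>
lemma cone_invariant_separation:
  assumes lcs: "locally_convex_tvs TYPE('z::{real_vector, t2_space})"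
    and C: "conic C" and A: "(A::'z set) = closure K" "convex K" "A \<noteq> {}"
    and invariant: "\<And>a c. a \<in> A \<Longrightarrow> c \<in> C \<Longrightarrow> a + c \<in> A" and p: "p \<notin> A"
  obtains F r where "F \<in> dual_space" "\<And>c. c \<in> C \<Longrightarrow> F c \<le> 0"
    "\<And>a. a \<in> A \<Longrightarrow> F a \<le> r" "r < F p"
proof -
  obtain F :: "'z \<Rightarrow> real" and r where F: "linear F" "continuous_on UNIV F"
      and below: "\<And>a. a \<in> A \<Longrightarrow> F a \<le> r" and "r < F p"
    using separation[OF lcs A(2), of p] p A(1,3) by auto
  obtain a0 where a0: "a0 \<in> A" using A(3) by blast
  have "F c \<le> 0" if c: "c \<in> C" for c
  proof (rule ccontr)
    assume "\<not> F c \<le> 0"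
    define t where "t = (r - F a0 + 1) / F c"
    have "0 \<le> r - F a0" using below[OF a0] by simp
    then have "0 \<le> t" using \<open>\<not> F c \<le> 0\<close> unfolding t_def by simp
    then have "F (a0 + t *\<^sub>R c) \<le> r" using conic_mul[OF C c] by (intro below invariant a0)
    moreover have "F (a0 + t *\<^sub>R c) = r + 1"
      using F(1) \<open>\<not> F c \<le> 0\<close> unfolding t_def by (simp add: linear_add linear_cmul)
    ultimately show False by simp
  qed
  then show ?thesis using that F \<open>r < F p\<close> below unfolding dual_space_def by blast
qed

lemma neg_dual_cone_nonzero:
  assumes "neg_dual_cone C \<noteq> {\<lambda>_. 0}"
  shows "neg_dual_cone C - {\<lambda>_. 0} \<noteq> {}"
proof -
  have "(\<lambda>_. 0) \<in> neg_dual_cone C"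
    unfolding neg_dual_cone_def dual_space_def by (auto intro: linear_zero continuous_on_const)
  then show ?thesis using assms by blast
qed

lemma neg_dual_cone_linear: "zs \<in> neg_dual_cone C - {\<lambda>_. 0} \<Longrightarrow> linear zs"
  unfolding neg_dual_cone_def dual_space_def by blast

text \<open>The
  empty set is covered because \<open>sigma_up {} zs = \<infinity>\<close> and a nonzero \<open>zs\<close> exists.\<close>
lemma dual_representation_up:
  assumes lcs: "locally_convex_tvs TYPE('z::{real_vector, t2_space})"
    and C: "conic C" and nontriv: "neg_dual_cone C \<noteq> {\<lambda>_. 0}" and A: "(A::'z set) \<in> Q_up C"
  shows "A = (\<Inter>zs\<in>neg_dual_cone C - {\<lambda>_. 0}. {x. sigma_up A zs \<le> ereal (- zs x)})"
proof (intro equalityI subsetI)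
  fix p assume p: "p \<in> (\<Inter>zs\<in>neg_dual_cone C - {\<lambda>_. 0}. {x. sigma_up A zs \<le> ereal (- zs x)})"
  show "p \<in> A"
  proof (rule ccontr)
    assume "p \<notin> A"
    show False
    proof (cases "A = {}")
      case True
      then show False using p neg_dual_cone_nonzero[OF nontriv] unfolding sigma_up_def by (auto simp: top_ereal_def)
    next
      case False
      obtain F r where F: "F \<in> dual_space" "\<And>c. c \<in> C \<Longrightarrow> F c \<le> 0"
          and below: "\<And>a. a \<in> A \<Longrightarrow> F a \<le> r" and "r < F p"
        using cone_invariant_separation[OF lcs C _ convex_convex_hull False Q_up_invariant[OF A] \<open>p \<notin> A\<close>] A
        unfolding Q_up_def by blast
      have "F \<noteq> (\<lambda>_. 0)" using below \<open>r < F p\<close> False by fastforce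
      then have "sigma_up A F \<le> ereal (- F p)" using p F unfolding neg_dual_cone_def by blast
      moreover have "ereal (- r) \<le> sigma_up A F" unfolding sigma_up_def using below by (auto intro: INF_greatest)
      ultimately have "ereal (- r) \<le> ereal (- F p)" by (rule order_trans[rotated])
      then show False using \<open>r < F p\<close> by simp
    qed
  qed
qed (auto simp: sigma_up_def intro: INF_lower)

text \<open>The same for \<open>Q_down C\<close>, using the separation lemma for the cone \<open>- C\<close> and the
  negated functional.\<close>
lemma dual_representation_down:
  assumes lcs: "locally_convex_tvs TYPE('z::{real_vector, t2_space})"
    and C: "conic C" and nontriv: "neg_dual_cone C \<noteq> {\<lambda>_. 0}" and A: "(A::'z set) \<in> Q_down C"
  shows "A = (\<Inter>zs\<in>neg_dual_cone C - {\<lambda>_. 0}. {x. ereal (- zs x) \<le> sigma_down A zs})"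
proof (intro equalityI subsetI)
  fix p assume p: "p \<in> (\<Inter>zs\<in>neg_dual_cone C - {\<lambda>_. 0}. {x. ereal (- zs x) \<le> sigma_down A zs})"
  show "p \<in> A"
  proof (rule ccontr)
    assume "p \<notin> A"
    show False
    proof (cases "A = {}")
      case True
      then show False using p neg_dual_cone_nonzero[OF nontriv] unfolding sigma_down_def by (auto simp: bot_ereal_def)
    next
      case False
      obtain F r where F: "F \<in> dual_space" "\<And>c. c \<in> uminus ` C \<Longrightarrow> F c \<le> 0"
          and below: "\<And>a. a \<in> A \<Longrightarrow> F a \<le> r" and "r < F p"
        using cone_invariant_separation[OF lcs conic_negations[OF C] _ convex_convex_hull False
            Q_down_invariant[OF A] \<open>p \<notin> A\<close>] A
        unfolding Q_down_def by blast
      let ?zs = "\<lambda>x. - F x"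
      have "?zs \<in> dual_space" using F(1) unfolding dual_space_def by (auto intro: linear_compose_neg continuous_on_minus)
      moreover have "?zs c \<le> 0" if "c \<in> C" for c
        using F(1) F(2)[of "- c"] that unfolding dual_space_def by (auto simp: linear_neg)
      moreover have "?zs \<noteq> (\<lambda>_. 0)"
      proof
        assume "?zs = (\<lambda>_. 0)"
        then have "F x = 0" for x by (metis neg_equal_0_iff_equal)
        then show False using below \<open>r < F p\<close> False by fastforce
      qed
      ultimately have "?zs \<in> neg_dual_cone C - {\<lambda>_. 0}" unfolding neg_dual_cone_def by blast
      then have "ereal (- ?zs p) \<le> sigma_down A ?zs" using p by blast
      then have "ereal (F p) \<le> sigma_down A ?zs" by simp
      moreover have "sigma_down A ?zs \<le> ereal r" unfolding sigma_down_def using below by (auto intro: SUP_least)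
      ultimately have "ereal (F p) \<le> ereal r" by (rule order_trans)
      then show False using \<open>r < F p\<close> by simp
    qed
  qed
qed (auto simp: sigma_down_def intro: SUP_upper)

text \<open>The inf-addition on extended reals is Isabelle's addition (where \<open>\<infinity> + - \<infinity> = \<infinity>\<close>),
  and the sup-addition is its dual.\<close>
lemma inf_add_eq_plus: "inf_add s t = s + t"
proof -
  define S where "S = {ereal (a + b) | a b. s \<le> ereal a \<and> t \<le> ereal b}"
  have "Inf S = s + t"
  proof (cases "s = \<infinity> \<or> t = \<infinity>")
    case True
    then have "S = {}" unfolding S_def by auto
    then show ?thesis using True by (auto simp: top_ereal_def)
  next
    case not_top: False
    show ?thesis
    proof (cases "s = -\<infinity> \<or> t = -\<infinity>")
      case True
      define m where "m = max (real_of_ereal s) (real_of_ereal t)"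
      have m: "s \<le> ereal m" "t \<le> ereal m" using not_top unfolding m_def by (cases s; cases t; auto)+
      have "ereal r \<in> S" for r
      proof (cases "s = -\<infinity>")
        case True
        then show ?thesis unfolding S_def using m by (intro CollectI exI[of _ "r - m"] exI[of _ m]) auto
      next
        case False
        then have "t = -\<infinity>" using \<open>s = -\<infinity> \<or> t = -\<infinity>\<close> by auto
        then show ?thesis unfolding S_def using m by (intro CollectI exI[of _ m] exI[of _ "r - m"]) auto
      qed
      then have "Inf S = -\<infinity>" by (intro ereal_bot) (simp add: Inf_lower)
      then show ?thesis using True not_top by auto
    next
      case False
      then obtain x y where xy: "s = ereal x" "t = ereal y" using not_top by (cases s; cases t) auto
      then have "ereal (x + y) \<in> S" "\<And>i. i \<in> S \<Longrightarrow> ereal (x + y) \<le> i" unfolding S_def by auto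
      then have "Inf S = ereal (x + y)" by (meson Inf_greatest Inf_lower antisym)
      then show ?thesis using xy by simp
    qed
  qed
  then show ?thesis unfolding inf_add_def S_def .
qed

lemma sup_add_eq: "sup_add s t = - (- s + - t)"
proof -
  let ?R = "{ereal (a + b) | a b. - s \<le> ereal a \<and> - t \<le> ereal b}"
  have "{ereal (a + b) | a b. ereal a \<le> s \<and> ereal b \<le> t} = uminus ` ?R"
  proof (intro equalityI subsetI)
    fix v assume "v \<in> {ereal (a + b) | a b. ereal a \<le> s \<and> ereal b \<le> t}"
    then obtain a b where v: "v = ereal (a + b)" and ab: "ereal a \<le> s" "ereal b \<le> t" by blast
    have "- s \<le> ereal (- a)" "- t \<le> ereal (- b)"
      using ab ereal_minus_le_minus by (metis uminus_ereal.simps(1))+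
    moreover have "v = - ereal (- a + - b)" using v by simp
    ultimately show "v \<in> uminus ` ?R" by blast
  next
    fix v assume "v \<in> uminus ` ?R"
    then obtain a b where v: "v = - ereal (a + b)" and ab: "- s \<le> ereal a" "- t \<le> ereal b" by blast
    have "ereal (- a) \<le> s" "ereal (- b) \<le> t"
      using ab ereal_minus_le_minus by (metis uminus_ereal.simps(1) ereal_uminus_uminus)+
    moreover have "v = ereal (- a + - b)" using v by simp
    ultimately show "v \<in> {ereal (a + b) | a b. ereal a \<le> s \<and> ereal b \<le> t}" by blast
  qed
  then have "sup_add s t = - Inf ?R" unfolding sup_add_def by (simp add: ereal_Sup_uminus_image_eq)
  also have "Inf ?R = - s + - t" using inf_add_eq_plus unfolding inf_add_def by simp
  finally show ?thesis .
qed

lemma inf_diff_le_iff: "inf_diff r s \<le> u \<longleftrightarrow> r \<le> s + u"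
proof -
  have "\<exists>t0. \<forall>t. r \<le> s + t \<longleftrightarrow> t0 \<le> t"
  proof (cases s)
    case (real x)
    have "r \<le> s + t \<longleftrightarrow> r - ereal x \<le> t" for t using real by (cases r; cases t) auto
    then show ?thesis by blast
  next
    case PInf
    then show ?thesis by (intro exI[of _ "-\<infinity>"]) auto
  next
    case MInf
    have "r \<le> s + t \<longleftrightarrow> (if r = -\<infinity> then -\<infinity> else \<infinity>) \<le> t" for t using MInf by (cases r; cases t) auto
    then show ?thesis by blast
  qed
  then obtain t0 where t0: "\<And>t. r \<le> s + t \<longleftrightarrow> t0 \<le> t" by blast
  have "inf_diff r s = t0" unfolding inf_diff_def inf_add_eq_plus by (rule Least_equality) (use t0 in auto)
  then show ?thesis using t0 by simp
qed

lemma le_sup_diff_iff: "u \<le> sup_diff r s \<longleftrightarrow> sup_add s u \<le> r"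
proof -
  have "\<exists>t1. \<forall>t. - (- s + - t) \<le> r \<longleftrightarrow> t \<le> t1"
  proof (cases s)
    case (real x)
    have "- (- s + - t) \<le> r \<longleftrightarrow> t \<le> r - ereal x" for t using real by (cases r; cases t) auto
    then show ?thesis by blast
  next
    case MInf
    then show ?thesis by (intro exI[of _ "\<infinity>"]) auto
  next
    case PInf
    have "- (- s + - t) \<le> r \<longleftrightarrow> t \<le> (if r = \<infinity> then \<infinity> else -\<infinity>)" for t using PInf by (cases r; cases t) auto
    then show ?thesis by blast
  qed
  then obtain t1 where t1: "\<And>t. - (- s + - t) \<le> r \<longleftrightarrow> t \<le> t1" by blast
  have "sup_diff r s = t1" unfolding sup_diff_def sup_add_eq by (rule Greatest_equality) (use t1 in auto)
  then show ?thesis using t1 sup_add_eq by simp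
qed

lemma sup_add_real: "sup_add s (ereal w) = s + ereal w"
  unfolding sup_add_eq by (cases s) auto

lemma le_INF_plus_iff:
  fixes f :: "'a \<Rightarrow> ereal"
  shows "(\<forall>b\<in>B. r \<le> f b + ereal w) \<longleftrightarrow> r \<le> (INF b\<in>B. f b) + ereal w"
proof -
  have shift: "r \<le> x + ereal w \<longleftrightarrow> r - ereal w \<le> x" for x by (cases r; cases x) auto
  show ?thesis unfolding shift by (simp add: le_INF_iff)
qed

lemma SUP_plus_le_iff:
  fixes f :: "'a \<Rightarrow> ereal"
  shows "(\<forall>b\<in>B. f b + ereal w \<le> r) \<longleftrightarrow> (SUP b\<in>B. f b) + ereal w \<le> r"
proof -
  have shift: "x + ereal w \<le> r \<longleftrightarrow> x \<le> r - ereal w" for x by (cases r; cases x) auto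
  show ?thesis unfolding shift by (simp add: SUP_le_iff)
qed

text \<open>If \<open>A\<close> is the intersection of its supporting half-spaces for a family \<open>D\<close> of linear
  functionals, then \<open>set_diff A B\<close> is cut out by the inf-differences of the support
  functions: \<open>B + z \<subseteq> A\<close> iff \<open>sigma_up A zs \<le> sigma_up B zs - zs z\<close> for all \<open>zs \<in> D\<close>.\<close>
lemma set_diff_halfspaces_up:
  assumes lin: "\<And>zs. zs \<in> D \<Longrightarrow> linear zs"
    and A: "A = (\<Inter>zs\<in>D. {x. sigma_up A zs \<le> ereal (- zs x)})"
  shows "set_diff A B = (\<Inter>zs\<in>D. {z. inf_diff (sigma_up A zs) (sigma_up B zs) \<le> ereal (- zs z)})"
proof (intro set_eqI)
  fix z
  have shift: "ereal (- zs (b + z)) = ereal (- zs b) + ereal (- zs z)" if "zs \<in> D" for zs b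
    using lin[OF that] by (simp add: linear_add)
  have per_functional: "(\<forall>b\<in>B. sigma_up A zs \<le> ereal (- zs (b + z)))
      \<longleftrightarrow> sigma_up A zs \<le> sigma_up B zs + ereal (- zs z)" if "zs \<in> D" for zs
    unfolding shift[OF that] sigma_up_def[of B] by (rule le_INF_plus_iff)
  have "z \<in> set_diff A B \<longleftrightarrow> (\<forall>zs\<in>D. \<forall>b\<in>B. sigma_up A zs \<le> ereal (- zs (b + z)))"
    unfolding set_diff_def by (subst A) blast
  also have "\<dots> \<longleftrightarrow> (\<forall>zs\<in>D. sigma_up A zs \<le> sigma_up B zs + ereal (- zs z))"
    using per_functional by blast
  finally show "z \<in> set_diff A B \<longleftrightarrow> z \<in> (\<Inter>zs\<in>D. {z. inf_diff (sigma_up A zs) (sigma_up B zs) \<le> ereal (- zs z)})"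
    by (simp add: inf_diff_le_iff)
qed

lemma set_diff_halfspaces_down:
  assumes lin: "\<And>zs. zs \<in> D \<Longrightarrow> linear zs"
    and A: "A = (\<Inter>zs\<in>D. {x. ereal (- zs x) \<le> sigma_down A zs})"
  shows "set_diff A B = (\<Inter>zs\<in>D. {z. ereal (- zs z) \<le> sup_diff (sigma_down A zs) (sigma_down B zs)})"
proof (intro set_eqI)
  fix z
  have shift: "ereal (- zs (b + z)) = ereal (- zs b) + ereal (- zs z)" if "zs \<in> D" for zs b
    using lin[OF that] by (simp add: linear_add)
  have per_functional: "(\<forall>b\<in>B. ereal (- zs (b + z)) \<le> sigma_down A zs)
      \<longleftrightarrow> sigma_down B zs + ereal (- zs z) \<le> sigma_down A zs" if "zs \<in> D" for zs
    unfolding shift[OF that] sigma_down_def[of B] by (rule SUP_plus_le_iff)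
  have "z \<in> set_diff A B \<longleftrightarrow> (\<forall>zs\<in>D. \<forall>b\<in>B. ereal (- zs (b + z)) \<le> sigma_down A zs)"
    unfolding set_diff_def by (subst A) blast
  also have "\<dots> \<longleftrightarrow> (\<forall>zs\<in>D. sigma_down B zs + ereal (- zs z) \<le> sigma_down A zs)"
    using per_functional by blast
  finally show "z \<in> set_diff A B \<longleftrightarrow> z \<in> (\<Inter>zs\<in>D. {z. ereal (- zs z) \<le> sup_diff (sigma_down A zs) (sigma_down B zs)})"
    by (simp add: le_sup_diff_iff sup_add_real)
qed

theorem mainTheorem16:
  fixes C :: "'z::{real_vector, t2_space} set"
  assumes lcs: "locally_convex_tvs TYPE('z)"
    and cone: "convex_cone C" and zero: "0 \<in> C"
    and nontriv: "neg_dual_cone C \<noteq> {\<lambda>_. 0}"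
  shows
   "(\<forall>A\<in>Q_up C. \<forall>B\<in>Q_up C.
       set_diff A B =
         (\<Inter>zs\<in>neg_dual_cone C - {\<lambda>_. 0}.
            {z. inf_diff (sigma_up A zs) (sigma_up B zs) \<le> ereal (- zs z)}) \<and>
       (\<forall>zs\<in>neg_dual_cone C - {\<lambda>_. 0}.
          A = {z. sigma_up A zs \<le> ereal (- zs z)} \<longrightarrow>
          set_diff A B = {z. inf_diff (sigma_up A zs) (sigma_up B zs) \<le> ereal (- zs z)}))
    \<and>
    (\<forall>A\<in>Q_down C. \<forall>B\<in>Q_down C.
       set_diff A B =
         (\<Inter>zs\<in>neg_dual_cone C - {\<lambda>_. 0}.
            {z. ereal (- zs z) \<le> sup_diff (sigma_down A zs) (sigma_down B zs)}) \<and>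
       (\<forall>zs\<in>neg_dual_cone C - {\<lambda>_. 0}.
          A = {z. ereal (- zs z) \<le> sigma_down A zs} \<longrightarrow>
          set_diff A B = {z. ereal (- zs z) \<le> sup_diff (sigma_down A zs) (sigma_down B zs)}))"
proof -
  let ?D = "neg_dual_cone C - {\<lambda>_. 0}"
  have conic: "conic C" using cone unfolding convex_cone_def by blast
  show ?thesis
  proof (intro conjI ballI impI)
    fix A B assume A: "A \<in> Q_up C"
    show "set_diff A B = (\<Inter>zs\<in>?D. {z. inf_diff (sigma_up A zs) (sigma_up B zs) \<le> ereal (- zs z)})"
      by (rule set_diff_halfspaces_up[OF neg_dual_cone_linear dual_representation_up[OF lcs conic nontriv A]])
    fix zs assume "zs \<in> ?D" "A = {z. sigma_up A zs \<le> ereal (- zs z)}"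
    then show "set_diff A B = {z. inf_diff (sigma_up A zs) (sigma_up B zs) \<le> ereal (- zs z)}"
      using set_diff_halfspaces_up[of "{zs}" A B] neg_dual_cone_linear[of zs C] by simp
  next
    fix A B assume A: "A \<in> Q_down C"
    show "set_diff A B = (\<Inter>zs\<in>?D. {z. ereal (- zs z) \<le> sup_diff (sigma_down A zs) (sigma_down B zs)})"
      by (rule set_diff_halfspaces_down[OF neg_dual_cone_linear dual_representation_down[OF lcs conic nontriv A]])
    fix zs assume "zs \<in> ?D" "A = {z. ereal (- zs z) \<le> sigma_down A zs}"
    then show "set_diff A B = {z. ereal (- zs z) \<le> sup_diff (sigma_down A zs) (sigma_down B zs)}"
      using set_diff_halfspaces_down[of "{zs}" A B] neg_dual_cone_linear[of zs C] by simp
  qed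
qed

end
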